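(* Let $p(x,y)\not\equiv0$ be a real polynomial with $p(0,0)=0$, $\nabla p(0,0)=(0,0)$, such that every main $A'$-quasi-homogeneous form of $p$ ($A'\in\mathbb{N}^2$) consisting of one or two terms is nonnegative on $\mathbb{R}^2$ and nondegenerate in the weak sense. Let $A=(A_1,A_2)\in\mathcal{A}_p$ and suppose the exponent vectors $k$ of $p$ take exactly two values $B_1^A<B_2^A$ of $\langle A,k\rangle$, so that $p=\varphi_1^A+\varphi_2^A$. Suppose there is $u_0\in U_p(A)$ which is a root of $g_1^A$ of even multiplicity $k\ge2$ and a root of $g_2^A$ of multiplicity exactly $1$. Then $(0,0)$ is not a point of local minimum of $p$.
   Context: $\mathbb{N}=\{1,2,\dots\}$; $\mathbb{N}_0^2$ is the set of $(A_1,A_2)\in\mathbb{N}^2$ with $\gcd(A_1,A_2)=1$. $N_p$ is the support of $p$. For $A'\in\mathbb{N}^2$, the main $A'$-quasi-homogeneous form of $p$ is the sum of the terms of $p$ whose exponent vectors $k$ minimize $\langle A',k\rangle$ over $N_p$. A function $f$ is nondegenerate in the weak sense if $f(x,y)\ne0$ whenever $x\ne0,y\ne0$. For $A\in\mathbb{N}_0^2$, $\varphi_j^A$ is the sum of terms of $p$ with $\langle A,k\rangle=B_j^A$ ($B_1^A<B_2^A<\dots$ the distinct values on $N_p$), so $\varphi_1^A$ is the main $A$-form. For such a form $\sum_ic_ix^{\gamma_i}y^{\delta_i}$ ($c_i\ne0$, $\gamma_1>\gamma_2>\dots$) the characteristic polynomial is $\sum_ic_iu^{(\gamma_1-\gamma_i)/A_2}$;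 $g_1^A,g_2^A$ are those of $\varphi_1^A,\varphi_2^A$. $\mathcal{A}_p$ is the set of $A\in\mathbb{N}_0^2$ such that $\varphi_1^A$ has at least three terms, $g_1^A\ge0$ on $\mathbb{R}$, and $g_1^A$ has a real root; $U_p(A)$ is the set of real roots of $g_1^A$. Local minimum at $(0,0)$ means $p\ge p(0,0)$ near $(0,0)$. *)

theory Defs
  imports "HOL-Analysis.Analysis" "HOL-Computational_Algebra.Polynomial"
begin

text \<open>A real polynomial in two variables is represented by its coefficient function
  c :: nat \<times> nat \<Rightarrow> real with finite support; the exponent vector (a,b) stands for x^a y^b.\<close>

definition supp :: "(nat \<times> nat \<Rightarrow> real) \<Rightarrow> (nat \<times> nat) set" where
  "supp c = {k. c k \<noteq> 0}"

definition peval :: "(nat \<times> nat \<Rightarrow> real) \<Rightarrow> real \<Rightarrow> real \<Rightarrow> real" where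
  "peval c x y = (\<Sum>k\<in>supp c. c k * x ^ fst k * y ^ snd k)"

definition wt :: "nat \<times> nat \<Rightarrow> nat \<times> nat \<Rightarrow> nat" where
  "wt A k = fst A * fst k + snd A * snd k"

definition restr :: "(nat \<times> nat \<Rightarrow> real) \<Rightarrow> (nat \<times> nat) set \<Rightarrow> (nat \<times> nat \<Rightarrow> real)" where
  "restr c S k = (if k \<in> S then c k else 0)"

definition main_form :: "(nat \<times> nat \<Rightarrow> real) \<Rightarrow> nat \<times> nat \<Rightarrow> (nat \<times> nat \<Rightarrow> real)" where
  "main_form c A = restr c {k \<in> supp c. wt A k = Min (wt A ` supp c)}"

definition Bval :: "(nat \<times> nat \<Rightarrow> real) \<Rightarrow> nat \<times> nat \<Rightarrow> nat \<Rightarrow> nat" where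
  "Bval c A j = sorted_list_of_set (wt A ` supp c) ! (j - 1)"

definition phi :: "(nat \<times> nat \<Rightarrow> real) \<Rightarrow> nat \<times> nat \<Rightarrow> nat \<Rightarrow> (nat \<times> nat \<Rightarrow> real)" where
  "phi c A j = restr c {k \<in> supp c. wt A k = Bval c A j}"

definition charpoly :: "(nat \<times> nat \<Rightarrow> real) \<Rightarrow> nat \<times> nat \<Rightarrow> real poly" where
  "charpoly f A = (\<Sum>k\<in>supp f. monom (f k) ((Max (fst ` supp f) - fst k) div snd A))"

definition gA :: "(nat \<times> nat \<Rightarrow> real) \<Rightarrow> nat \<times> nat \<Rightarrow> nat \<Rightarrow> real poly" where
  "gA c A j = charpoly (phi c A j) A"

definition in_N02 :: "nat \<times> nat \<Rightarrow> bool" where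
  "in_N02 A \<longleftrightarrow> fst A > 0 \<and> snd A > 0 \<and> coprime (fst A) (snd A)"

definition nondeg_weak :: "(real \<Rightarrow> real \<Rightarrow> real) \<Rightarrow> bool" where
  "nondeg_weak f \<longleftrightarrow> (\<forall>x y. x \<noteq> 0 \<longrightarrow> y \<noteq> 0 \<longrightarrow> f x y \<noteq> 0)"

definition in_Ap :: "(nat \<times> nat \<Rightarrow> real) \<Rightarrow> nat \<times> nat \<Rightarrow> bool" where
  "in_Ap c A \<longleftrightarrow> in_N02 A \<and> card (supp (phi c A 1)) \<ge> 3
     \<and> (\<forall>u. poly (gA c A 1) u \<ge> 0) \<and> (\<exists>u. poly (gA c A 1) u = 0)"

definition Up :: "(nat \<times> nat \<Rightarrow> real) \<Rightarrow> nat \<times> nat \<Rightarrow> real set" where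
  "Up c A = {u. poly (gA c A 1) u = 0}"

definition local_min_at0 :: "(real \<Rightarrow> real \<Rightarrow> real) \<Rightarrow> bool" where
  "local_min_at0 f \<longleftrightarrow> (\<forall>\<^sub>F z in nhds (0::real, 0::real). f (fst z) (snd z) \<ge> f 0 0)"

end

theory Submission
  imports Defs
begin

(* Write A = (a, b). A form f that is A-quasi-homogeneous of degree B satisfies
   f(t^a x, t^b y) = t^B f(x, y), and f(s, v) = s^M v^d g(v^a / s^b) for s \<noteq> 0, where g is its
   characteristic polynomial; coprimality of a and b makes the exponents of g line up with the
   terms of f. Since g1(0) \<noteq> 0 we have u0 \<noteq> 0, so there are s = \<plusminus>1 and v0 \<noteq> 0 with
   v0^a / s^b = u0. On the curves (t^a s, t^b v) this gives
     p = t^B1 (v - v0)^n E1(v) + t^B2 (v - v0) E2(v),   n \<ge> 2,  E2(v0) \<noteq> 0,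
   and along v = v0 + \<epsilon> t^m with m = B2 - B1 + 1 the first term is O(t^(B2+m+1)) while the
   second is \<epsilon> E2(v0) t^(B2+m) + o(t^(B2+m)); the sign \<epsilon> = -sgn E2(v0) makes p negative. *)

definition quasi_homogeneous :: "nat \<times> nat \<Rightarrow> nat \<Rightarrow> (nat \<times> nat \<Rightarrow> real) \<Rightarrow> bool" where
  "quasi_homogeneous A B f \<longleftrightarrow> (\<forall>k\<in>supp f. wt A k = B)"

lemma wt_eq_exponent_shift:
  assumes cop: "coprime (fst A) (snd A)" and b: "snd A > 0"
    and eq: "wt A k = wt A k0" and le: "fst k \<le> fst k0"
  obtains j where "fst k0 = fst k + snd A * j" and "snd k = snd k0 + fst A * j"
proof -
  have "snd A * snd k0 \<le> snd A * snd k"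
    using eq le unfolding wt_def by (metis add_le_cancel_right mult_le_mono2 nat_add_left_cancel_le)
  then have sk: "snd k0 \<le> snd k" using b by simp
  have shift: "fst A * (fst k0 - fst k) = snd A * (snd k - snd k0)"
    using eq le sk unfolding wt_def by (simp add: diff_mult_distrib2 algebra_simps)
  then have "snd A dvd fst k0 - fst k"
    using cop by (metis coprime_commute coprime_dvd_mult_right_iff dvd_triv_left)
  then obtain j where j: "fst k0 - fst k = snd A * j" by blast
  have "snd k - snd k0 = fst A * j" using shift j b by (simp add: mult.left_commute)
  with j le sk show thesis by (intro that[of j]) auto
qed

lemma peval_quasi_homogeneous:
  assumes "quasi_homogeneous A B f"
  shows "peval f (t ^ fst A * x) (t ^ snd A * y) = t ^ B * peval f x y"
  unfolding peval_def sum_distrib_left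
proof (rule sum.cong[OF refl])
  fix k assume "k \<in> supp f"
  then have "B = fst A * fst k + snd A * snd k"
    using assms unfolding quasi_homogeneous_def wt_def by simp
  then have "t ^ B = t ^ (fst A * fst k) * t ^ (snd A * snd k)"
    by (simp add: power_add)
  then show "f k * (t ^ fst A * x) ^ fst k * (t ^ snd A * y) ^ snd k
      = t ^ B * (f k * x ^ fst k * y ^ snd k)"
    by (simp add: power_mult_distrib power_mult mult_ac)
qed

lemma charpoly_exponent_shift:
  assumes fin: "finite (supp f)" and hom: "quasi_homogeneous A B f"
    and cop: "coprime (fst A) (snd A)" and b: "snd A > 0"
    and k0: "k0 \<in> supp f" "fst k0 = Max (fst ` supp f)" and k: "k \<in> supp f"
  obtains j where "fst k0 = fst k + snd A * j" "snd k = snd k0 + fst A * j"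
    and "(Max (fst ` supp f) - fst k) div snd A = j"
proof -
  have le: "fst k \<le> fst k0" using fin k unfolding k0(2) by (simp add: Max_ge)
  have eq: "wt A k = wt A k0" using hom k k0(1) unfolding quasi_homogeneous_def by simp
  obtain j where j: "fst k0 = fst k + snd A * j" "snd k = snd k0 + fst A * j"
    using wt_eq_exponent_shift[OF cop b eq le] .
  moreover have "(Max (fst ` supp f) - fst k) div snd A = j" using j(1) k0(2) b by simp
  ultimately show thesis by (rule that)
qed

lemma poly_charpoly_0_neq_0:
  assumes fin: "finite (supp f)" and ne: "supp f \<noteq> {}" and hom: "quasi_homogeneous A B f"
    and cop: "coprime (fst A) (snd A)" and b: "snd A > 0"
  shows "poly (charpoly f A) 0 \<noteq> 0"
proof -
  define M where "M = Max (fst ` supp f)"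
  have "M \<in> fst ` supp f" using fin ne unfolding M_def by simp
  then obtain k0 where k0: "k0 \<in> supp f" "fst k0 = M" by auto
  have "(M - fst k) div snd A \<noteq> 0" if k: "k \<in> supp f" "k \<noteq> k0" for k
    using charpoly_exponent_shift[OF fin hom cop b k0[unfolded M_def] k(1)] k(2) b
    unfolding M_def by (metis add_0_right mult_0_right prod_eqI)
  then have "poly (charpoly f A) 0 = f k0"
    unfolding charpoly_def poly_sum poly_monom M_def[symmetric]
    using fin k0 by (simp add: sum.remove[of _ k0] sum.neutral)
  with k0 show ?thesis by (simp add: supp_def)
qed

lemma peval_eq_charpoly:
  assumes fin: "finite (supp f)" and hom: "quasi_homogeneous A B f"
    and cop: "coprime (fst A) (snd A)" and b: "snd A > 0"
    and k0: "k0 \<in> supp f" "fst k0 = Max (fst ` supp f)" and s: "s \<noteq> 0"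
  shows "peval f s v = s ^ fst k0 * v ^ snd k0 * poly (charpoly f A) (v ^ fst A / s ^ snd A)"
  unfolding peval_def charpoly_def poly_sum poly_monom sum_distrib_left
proof (rule sum.cong[OF refl])
  fix k assume k: "k \<in> supp f"
  obtain j where j: "fst k0 = fst k + snd A * j" "snd k = snd k0 + fst A * j"
    and jdiv: "(Max (fst ` supp f) - fst k) div snd A = j"
    using charpoly_exponent_shift[OF fin hom cop b k0 k] .
  have "s ^ fst k = s ^ fst k0 / (s ^ snd A) ^ j"
    using s unfolding j(1) by (simp add: power_add power_mult)
  then show "f k * s ^ fst k * v ^ snd k = s ^ fst k0 * v ^ snd k0
      * (f k * (v ^ fst A / s ^ snd A) ^ ((Max (fst ` supp f) - fst k) div snd A))"
    unfolding jdiv j(2) by (simp add: power_add power_mult power_divide)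
qed

lemma obtain_power_quotient_eq:
  fixes u0 :: real
  assumes cop: "coprime a b" and a: "a > 0" and u0: "u0 \<noteq> 0"
  obtains s v0 :: real where "s \<noteq> 0" "v0 \<noteq> 0" "v0 ^ a / s ^ b = u0"
proof (cases "u0 > 0 \<or> odd a")
  case True
  then have "root a u0 ^ a = u0" using a odd_real_root_pow by force
  then show thesis using u0 a by (intro that[of 1 "root a u0"]) auto
next
  case False
  then have "odd b" using cop coprime_common_divisor[of a b 2] by auto
  moreover have "root a (- u0) ^ a = - u0" using False u0 a by simp
  ultimately show thesis using u0 a by (intro that[of "-1" "root a (- u0)"]) auto
qed

lemma poly_pullback_root_factor:
  fixes g :: "real poly" and s v0 :: real
  assumes g: "g \<noteq> 0" and a: "a > 0" and s: "s \<noteq> 0" and v0: "v0 \<noteq> 0"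
  obtains E where "isCont E v0" "E v0 \<noteq> 0"
    and "\<And>v. poly g (v ^ a / s ^ b) = (v - v0) ^ order (v0 ^ a / s ^ b) g * E v"
proof -
  define u0 where "u0 = v0 ^ a / s ^ b"
  obtain r where r: "g = [:-u0, 1:] ^ order u0 g * r" "\<not> [:-u0, 1:] dvd r"
    using order_decomp[OF g] by blast
  define Q where "Q v = (\<Sum>i<a. v0 ^ (a - Suc i) * v ^ i) / s ^ b" for v
  have Q: "v ^ a / s ^ b - u0 = (v - v0) * Q v" for v
    unfolding u0_def Q_def diff_divide_distrib[symmetric] power_diff_sumr2 by simp
  have "Q v0 = of_nat a * v0 ^ (a - 1) / s ^ b"
    unfolding Q_def by (simp add: power_add[symmetric])
  then have "Q v0 \<noteq> 0" using a s v0 by simp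
  moreover have "poly r u0 \<noteq> 0" using r(2) poly_eq_0_iff_dvd by blast
  ultimately show thesis
  proof (intro that[of "\<lambda>v. Q v ^ order u0 g * poly r (v ^ a / s ^ b)"])
    show "isCont (\<lambda>v. Q v ^ order u0 g * poly r (v ^ a / s ^ b)) v0"
      unfolding Q_def using s by (intro continuous_intros) auto
    show "poly g (v ^ a / s ^ b)
        = (v - v0) ^ order (v0 ^ a / s ^ b) g * (Q v ^ order u0 g * poly r (v ^ a / s ^ b))" for v
      unfolding u0_def[symmetric] by (subst r(1)) (simp add: poly_power Q power_mult_distrib)
  qed (simp_all add: u0_def)
qed

lemma quasi_homogeneous_curve_factor:
  assumes fin: "finite (supp f)" and ne: "supp f \<noteq> {}" and hom: "quasi_homogeneous A B f"
    and a: "fst A > 0" and b: "snd A > 0" and cop: "coprime (fst A) (snd A)"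
    and s: "s \<noteq> 0" and v0: "v0 \<noteq> 0"
  obtains E where "isCont E v0" "E v0 \<noteq> 0"
    and "\<And>t v. peval f (t ^ fst A * s) (t ^ snd A * v)
                 = t ^ B * (v - v0) ^ order (v0 ^ fst A / s ^ snd A) (charpoly f A) * E v"
proof -
  have "Max (fst ` supp f) \<in> fst ` supp f" using fin ne by simp
  then obtain k0 where k0: "k0 \<in> supp f" "fst k0 = Max (fst ` supp f)" by auto
  have "charpoly f A \<noteq> 0" using poly_charpoly_0_neq_0[OF fin ne hom cop b] by auto
  then obtain E where E: "isCont E v0" "E v0 \<noteq> 0"
    "\<And>v. poly (charpoly f A) (v ^ fst A / s ^ snd A)
           = (v - v0) ^ order (v0 ^ fst A / s ^ snd A) (charpoly f A) * E v"
    using poly_pullback_root_factor[OF _ a s v0] by blast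
  show thesis
  proof
    show "isCont (\<lambda>v. s ^ fst k0 * v ^ snd k0 * E v) v0"
      using E(1) by (intro continuous_intros)
    show "s ^ fst k0 * v0 ^ snd k0 * E v0 \<noteq> 0"
      using E(2) s v0 by simp
    show "peval f (t ^ fst A * s) (t ^ snd A * v)
        = t ^ B * (v - v0) ^ order (v0 ^ fst A / s ^ snd A) (charpoly f A)
            * (s ^ fst k0 * v ^ snd k0 * E v)" for t v
      unfolding peval_quasi_homogeneous[OF hom] peval_eq_charpoly[OF fin hom cop b k0 s] E(3)
      by (simp only: mult_ac)
  qed
qed

lemma supp_restr: "S \<subseteq> supp c \<Longrightarrow> supp (restr c S) = S"
  unfolding supp_def restr_def by auto

lemma peval_restr:
  "S \<subseteq> supp c \<Longrightarrow> peval (restr c S) x y = (\<Sum>k\<in>S. c k * x ^ fst k * y ^ snd k)"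
  unfolding peval_def supp_restr by (intro sum.cong) (auto simp: restr_def)

lemma peval_eq_sum_weight_classes:
  assumes "finite (supp c)"
  shows "peval c x y = (\<Sum>B\<in>wt A ` supp c. peval (restr c {k \<in> supp c. wt A k = B}) x y)"
  unfolding peval_def[of c] sum.image_gen[OF assms, of _ "wt A"]
  by (simp add: peval_restr)

lemma two_weight_classes:
  assumes fin: "finite (supp c)" and two: "card (wt A ` supp c) = 2"
  shows "wt A ` supp c = {Bval c A 1, Bval c A 2}" and "Bval c A 1 < Bval c A 2"
proof -
  define xs where "xs = sorted_list_of_set (wt A ` supp c)"
  have "length xs = 2" unfolding xs_def using two by simp
  then obtain x y where xs: "xs = [x, y]"
    by (metis One_nat_def Suc_1 length_0_conv length_Suc_conv)
  have "sorted_wrt (<) xs" "set xs = wt A ` supp c"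
    unfolding xs_def using fin by (simp_all add: strict_sorted_list_of_set)
  moreover have "Bval c A 1 = x" "Bval c A 2 = y"
    unfolding Bval_def xs_def[symmetric] xs by simp_all
  ultimately show "wt A ` supp c = {Bval c A 1, Bval c A 2}" and "Bval c A 1 < Bval c A 2"
    unfolding xs by auto
qed

lemma supp_phi: "supp (phi c A j) = {k \<in> supp c. wt A k = Bval c A j}"
  unfolding phi_def by (rule supp_restr) auto

lemma quasi_homogeneous_phi: "quasi_homogeneous A (Bval c A j) (phi c A j)"
  unfolding quasi_homogeneous_def supp_phi by simp

lemma finite_supp_phi: "finite (supp c) \<Longrightarrow> finite (supp (phi c A j))"
  unfolding supp_phi by simp

lemma supp_phi_nonempty:
  assumes fin: "finite (supp c)" and j: "1 \<le> j" "j \<le> card (wt A ` supp c)"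
  shows "supp (phi c A j) \<noteq> {}"
proof -
  have "Bval c A j \<in> set (sorted_list_of_set (wt A ` supp c))"
    unfolding Bval_def using j by (intro nth_mem) simp
  then have "Bval c A j \<in> wt A ` supp c" using fin by simp
  then show ?thesis unfolding supp_phi by force
qed

lemma zero_notin_Up:
  assumes fin: "finite (supp c)" and ne: "supp c \<noteq> {}" and A: "in_N02 A"
  shows "0 \<notin> Up c A"
proof -
  have "card (wt A ` supp c) \<ge> 1" using fin ne by (simp add: Suc_le_eq card_gt_0_iff)
  then have "supp (phi c A 1) \<noteq> {}" using supp_phi_nonempty[OF fin] by simp
  with A have "poly (charpoly (phi c A 1) A) 0 \<noteq> 0"
    by (intro poly_charpoly_0_neq_0[OF finite_supp_phi[OF fin] _ quasi_homogeneous_phi])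
      (simp_all add: in_N02_def)
  then show ?thesis unfolding Up_def gA_def by simp
qed

lemma peval_two_weight_classes:
  assumes fin: "finite (supp c)" and two: "card (wt A ` supp c) = 2"
  shows "peval c x y = peval (phi c A 1) x y + peval (phi c A 2) x y"
  using two_weight_classes[OF assms]
  unfolding peval_eq_sum_weight_classes[OF fin, of _ _ A] phi_def by simp

lemma not_local_min_at0_two_scales:
  fixes p :: "real \<Rightarrow> real \<Rightarrow> real" and E1 E2 :: "real \<Rightarrow> real"
  assumes a: "0 < a" and b: "0 < b" and B: "B1 < B2" and n: "2 \<le> n" and p0: "p 0 0 = 0"
    and E1: "isCont E1 v0" and E2: "isCont E2 v0" "E2 v0 \<noteq> 0"
    and curve: "\<And>t v. p (t ^ a * s) (t ^ b * v)
                       = t ^ B1 * (v - v0) ^ n * E1 v + t ^ B2 * (v - v0) * E2 v"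
  shows "\<not> local_min_at0 p"
proof
  assume min: "local_min_at0 p"
  define m where "m = B2 - B1 + 1"
  define k where "k = B1 + m * n - (B2 + m)"
  define \<epsilon> where "\<epsilon> = - sgn (E2 v0)"
  define v where "v t = v0 + \<epsilon> * t ^ m" for t :: real
  define G where "G t = t ^ k * \<epsilon> ^ n * E1 (v t) + \<epsilon> * E2 (v t)" for t
  have "2 * m \<le> m * n" using n by simp
  moreover have "B1 + m = Suc B2" using B unfolding m_def by simp
  ultimately have k: "B1 + m * n = B2 + m + k" "0 < k" unfolding k_def by arith+
  have along: "p (t ^ a * s) (t ^ b * v t) = t ^ (B2 + m) * G t" for t
  proof -
    have "p (t ^ a * s) (t ^ b * v t)
        = (t ^ B1 * (t ^ m) ^ n) * \<epsilon> ^ n * E1 (v t) + (t ^ B2 * t ^ m) * \<epsilon> * E2 (v t)"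
      unfolding curve v_def by (simp add: power_mult_distrib mult_ac)
    also have "t ^ B1 * (t ^ m) ^ n = t ^ (B2 + m) * t ^ k"
      by (metis k(1) power_add power_mult)
    finally show ?thesis unfolding G_def by (simp add: power_add algebra_simps)
  qed
  have "(v \<longlongrightarrow> v0) (at_right 0)"
    unfolding v_def by (rule tendsto_eq_intros refl | simp add: m_def)+
  then have "(G \<longlongrightarrow> 0 * \<epsilon> ^ n * E1 v0 + \<epsilon> * E2 v0) (at_right 0)"
    unfolding G_def using E1 E2(1) k(2)
    by (intro tendsto_intros isCont_tendsto_compose[of _ E1] isCont_tendsto_compose[of _ E2])
      (auto intro: tendsto_eq_intros)
  moreover have "0 * \<epsilon> ^ n * E1 v0 + \<epsilon> * E2 v0 < 0"
    using E2(2) unfolding \<epsilon>_def by (simp add: sgn_if)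
  ultimately have G_neg: "\<forall>\<^sub>F t in at_right 0. G t < 0"
    by (simp add: order_tendstoD(2))
  have "filterlim (\<lambda>t. (t ^ a * s, t ^ b * v t)) (nhds (0, 0)) (at_right 0)"
    using \<open>(v \<longlongrightarrow> v0) (at_right 0)\<close> a b
    by (intro tendsto_eq_intros) (auto intro: tendsto_eq_intros)
  from eventually_compose_filterlim[OF min[unfolded local_min_at0_def] this]
  have "\<forall>\<^sub>F t in at_right 0. p (t ^ a * s) (t ^ b * v t) \<ge> p 0 0" by simp
  then have "\<forall>\<^sub>F t in at_right (0::real). False"
    using G_neg eventually_at_right_less[of 0]
  proof eventually_elim
    case (elim t)
    then have "t ^ (B2 + m) * G t < 0" by (simp add: mult_pos_neg)
    then show False using elim p0 along[of t] by simp
  qed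
  then show False by simp
qed

theorem mainTheorem15:
  fixes c :: "nat \<times> nat \<Rightarrow> real" and A :: "nat \<times> nat" and u0 :: real
  assumes fin: "finite (supp c)"
    and nonzero: "supp c \<noteq> {}"
    and p00: "peval c 0 0 = 0"
    and grad: "((\<lambda>z. peval c (fst z) (snd z)) has_derivative (\<lambda>h. 0)) (at (0, 0))"
    and forms: "\<And>A'. fst A' > 0 \<Longrightarrow> snd A' > 0 \<Longrightarrow>
         card (supp (main_form c A')) \<in> {1, 2} \<Longrightarrow>
         (\<forall>x y. peval (main_form c A') x y \<ge> 0) \<and> nondeg_weak (peval (main_form c A'))"
    and AAp: "in_Ap c A"
    and two: "card (wt A ` supp c) = 2"
    and u0U: "u0 \<in> Up c A"
    and mult1: "even (order u0 (gA c A 1)) \<and> order u0 (gA c A 1) \<ge> 2"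
    and mult2: "order u0 (gA c A 2) = 1"
  shows "\<not> local_min_at0 (peval c)"
proof -
  have A: "in_N02 A" using AAp unfolding in_Ap_def by simp
  then have a: "0 < fst A" and b: "0 < snd A" and cop: "coprime (fst A) (snd A)"
    unfolding in_N02_def by auto
  note fin_phi = finite_supp_phi[OF fin]
  have ne1: "supp (phi c A 1) \<noteq> {}" and ne2: "supp (phi c A 2) \<noteq> {}"
    using supp_phi_nonempty[OF fin] two by simp_all
  have "u0 \<noteq> 0" using zero_notin_Up[OF fin nonzero A] u0U by auto
  then obtain s v0 where s: "s \<noteq> 0" and v0: "v0 \<noteq> 0"
    and u0_eq: "v0 ^ fst A / s ^ snd A = u0"
    by (rule obtain_power_quotient_eq[OF cop a])
  note factor = quasi_homogeneous_curve_factor[OF fin_phi _ quasi_homogeneous_phi a b cop s v0,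
      unfolded u0_eq gA_def[symmetric]]
  obtain E1 where E1: "isCont E1 v0"
    "\<And>t v. peval (phi c A 1) (t ^ fst A * s) (t ^ snd A * v)
       = t ^ Bval c A 1 * (v - v0) ^ order u0 (gA c A 1) * E1 v"
    by (rule factor[OF ne1]) (rule that)
  obtain E2 where E2: "isCont E2 v0" "E2 v0 \<noteq> 0"
    "\<And>t v. peval (phi c A 2) (t ^ fst A * s) (t ^ snd A * v) = t ^ Bval c A 2 * (v - v0) * E2 v"
    using factor[OF ne2] unfolding mult2 power_one_right by blast
  show ?thesis
    by (rule not_local_min_at0_two_scales[where p = "peval c" and s = s,
          OF a b two_weight_classes(2)[OF fin two] conjunct2[OF mult1] p00 E1(1) E2(1,2)])
      (unfold peval_two_weight_classes[OF fin two] E1(2) E2(3), simp)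
qed

end
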